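(* Let $\alpha=\sqrt{a_{ij}y^iy^j}$ be a Riemannian metric and $\beta=b_iy^i$ a $1$-form which is closed and conformal but not parallel with respect to $\alpha$, and let $b:=\|\beta\|_\alpha$. Let $\kappa,\rho,\nu$ be functions of $b^2$ with $1-\kappa b^2>0$ and $\nu$ nowhere zero, and define $$\bar\alpha=e^{\rho(b^2)}\sqrt{\alpha^2-\kappa(b^2)\beta^2},\qquad \bar\beta=\nu(b^2)\beta.$$ Then $\bar\beta$ is closed and conformal with respect to $\bar\alpha$ if and only if $$\nu=C\sqrt{1-b^2\kappa}\,e^{2\rho}$$ for some non-zero constant $C$.
   Context: A $1$-form $\beta=b_iy^i$ is closed and conformal with respect to $\alpha=\sqrt{a_{ij}y^iy^j}$ if $b_{i|j}=c(x)a_{ij}$ for some function $c$, where $b_{i|j}$ is the covariant derivative with respect to the Levi-Civita connection of $\alpha$; it is parallel if $b_{i|j}=0$. *)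

theory Defs
  imports "HOL-Analysis.Analysis"
begin

text \<open>Local coordinate setting: an open connected coordinate domain U in R^n
  (n = CARD('n)). A Riemannian metric alpha = sqrt(a_ij y^i y^j) is given by the
  matrix-valued function a, a 1-form beta = b_i y^i by the covector field b.\<close>

definition pd :: "(real^'n \<Rightarrow> real) \<Rightarrow> 'n \<Rightarrow> real^'n \<Rightarrow> real" where
  "pd f j x = frechet_derivative f (at x) (axis j 1)"

fun pds :: "'n list \<Rightarrow> (real^'n \<Rightarrow> real) \<Rightarrow> real^'n \<Rightarrow> real" where
  "pds [] f = f"
| "pds (j # js) f = pd (pds js f) j"

definition smooth_on :: "(real^'n) set \<Rightarrow> (real^'n \<Rightarrow> real) \<Rightarrow> bool" where
  "smooth_on U f \<longleftrightarrow> (\<forall>js. pds js f differentiable_on U)"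

definition smooth_real_on :: "real set \<Rightarrow> (real \<Rightarrow> real) \<Rightarrow> bool" where
  "smooth_real_on I f \<longleftrightarrow> (\<forall>k. (deriv ^^ k) f differentiable_on I)"

definition riemannian_metric :: "(real^'n) set \<Rightarrow> (real^'n \<Rightarrow> real^'n^'n) \<Rightarrow> bool" where
  "riemannian_metric U a \<longleftrightarrow>
     (\<forall>i j. smooth_on U (\<lambda>x. a x $ i $ j)) \<and>
     (\<forall>x\<in>U. \<forall>i j. a x $ i $ j = a x $ j $ i) \<and>
     (\<forall>x\<in>U. \<forall>v. v \<noteq> 0 \<longrightarrow> v \<bullet> (a x *v v) > 0)"

definition smooth_one_form :: "(real^'n) set \<Rightarrow> (real^'n \<Rightarrow> real^'n) \<Rightarrow> bool" where
  "smooth_one_form U b \<longleftrightarrow> (\<forall>i. smooth_on U (\<lambda>x. b x $ i))"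

definition christoffel :: "(real^'n \<Rightarrow> real^'n^'n) \<Rightarrow> 'n \<Rightarrow> 'n \<Rightarrow> 'n \<Rightarrow> real^'n \<Rightarrow> real" where
  "christoffel a k i j x = (1/2) * (\<Sum>l\<in>UNIV. matrix_inv (a x) $ k $ l *
      (pd (\<lambda>y. a y $ l $ j) i x + pd (\<lambda>y. a y $ l $ i) j x - pd (\<lambda>y. a y $ i $ j) l x))"

definition covd :: "(real^'n \<Rightarrow> real^'n^'n) \<Rightarrow> (real^'n \<Rightarrow> real^'n) \<Rightarrow> 'n \<Rightarrow> 'n \<Rightarrow> real^'n \<Rightarrow> real" where
  "covd a b i j x = pd (\<lambda>y. b y $ i) j x - (\<Sum>k\<in>UNIV. christoffel a k i j x * b x $ k)"

definition closed_conformal :: "(real^'n) set \<Rightarrow> (real^'n \<Rightarrow> real^'n^'n) \<Rightarrow> (real^'n \<Rightarrow> real^'n) \<Rightarrow> bool" where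
  "closed_conformal U a b \<longleftrightarrow> (\<exists>c. \<forall>x\<in>U. \<forall>i j. covd a b i j x = c x * a x $ i $ j)"

definition parallel :: "(real^'n) set \<Rightarrow> (real^'n \<Rightarrow> real^'n^'n) \<Rightarrow> (real^'n \<Rightarrow> real^'n) \<Rightarrow> bool" where
  "parallel U a b \<longleftrightarrow> (\<forall>x\<in>U. \<forall>i j. covd a b i j x = 0)"

definition norm_sq :: "(real^'n \<Rightarrow> real^'n^'n) \<Rightarrow> (real^'n \<Rightarrow> real^'n) \<Rightarrow> real^'n \<Rightarrow> real" where
  "norm_sq a b x = b x \<bullet> (matrix_inv (a x) *v b x)"

text \<open>The deformed metric: bar alpha^2 = e^{2 rho(b^2)} (alpha^2 - kappa(b^2) beta^2),
  i.e. bar a_ij = e^{2 rho} (a_ij - kappa b_i b_j).\<close>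
definition deformed_metric ::
  "(real \<Rightarrow> real) \<Rightarrow> (real \<Rightarrow> real) \<Rightarrow> (real^'n \<Rightarrow> real^'n^'n) \<Rightarrow> (real^'n \<Rightarrow> real^'n) \<Rightarrow> real^'n \<Rightarrow> real^'n^'n" where
  "deformed_metric \<kappa> \<rho> a b x = (\<chi> i j. exp (2 * \<rho> (norm_sq a b x)) *
      (a x $ i $ j - \<kappa> (norm_sq a b x) * b x $ i * b x $ j))"

definition deformed_form :: "(real \<Rightarrow> real) \<Rightarrow> (real^'n \<Rightarrow> real^'n^'n) \<Rightarrow> (real^'n \<Rightarrow> real^'n) \<Rightarrow> real^'n \<Rightarrow> real^'n" where
  "deformed_form \<nu> a b x = \<nu> (norm_sq a b x) *\<^sub>R b x"

end

theory Submission
  imports Defs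
begin

text \<open>Put \<open>h = a - \<kappa> b\<otimes>b\<close> (with \<open>\<kappa>\<close> evaluated at \<open>b\<^sup>2\<close>), so that the deformed metric is
  \<open>exp(2\<rho>) h\<close> and the deformed form is \<open>\<nu> \<beta>\<close>. Since \<open>\<beta>\<close> is closed and conformal with factor \<open>c\<close>,
  the gradient of \<open>b\<^sup>2\<close> is \<open>2 c \<beta>\<close>, so every function of \<open>b\<^sup>2\<close> has gradient proportional to \<open>c \<beta>\<close>.
  Expanding the Christoffel symbols of the deformed metric, the covariant derivative of \<open>\<nu> \<beta>\<close> is
  \<open>c P h + c \<Phi> \<beta>\<otimes>\<beta>\<close> for explicit functions \<open>P, \<Phi>\<close> of \<open>b\<^sup>2\<close>, and \<open>\<Phi> = 2 sqrt(1 - b\<^sup>2\<kappa>) exp(2\<rho>) F'\<close>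
  where \<open>F = \<nu> / (sqrt(1 - b\<^sup>2\<kappa>) exp(2\<rho>))\<close>. In dimension at least two \<open>h\<close> and \<open>\<beta>\<otimes>\<beta>\<close> are
  linearly independent, so the deformed form is closed and conformal iff \<open>c \<Phi> \<beta> = 0\<close>, i.e. iff
  \<open>F(b\<^sup>2)\<close> has zero gradient, i.e. (\<open>U\<close> being connected) iff \<open>F(b\<^sup>2)\<close> is a constant, which is
  nonzero because \<open>\<nu>\<close> is.\<close>

lemma pd_eq_derivative: "(f has_derivative f') (at x) \<Longrightarrow> pd f j x = f' (axis j 1)"
  unfolding pd_def by (simp add: frechet_derivative_at[symmetric])

lemma has_derivative_pd_expansion:
  assumes "f differentiable (at x)"
  shows "(f has_derivative (\<lambda>h. \<Sum>j\<in>UNIV. h$j * pd f j x)) (at x)"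
proof -
  have fd: "(f has_derivative frechet_derivative f (at x)) (at x)"
    using assms frechet_derivative_works by blast
  have lin: "linear (frechet_derivative f (at x))"
    using fd has_derivative_linear by blast
  have "frechet_derivative f (at x) h = (\<Sum>j\<in>UNIV. h$j * pd f j x)" for h
  proof -
    have "frechet_derivative f (at x) h = frechet_derivative f (at x) (\<Sum>j\<in>UNIV. h$j *\<^sub>R axis j 1)"
      using basis_expansion[of h] by (simp add: scalar_mult_eq_scaleR)
    also have "\<dots> = (\<Sum>j\<in>UNIV. h$j * pd f j x)"
      using lin by (simp add: linear_sum linear_scale pd_def)
    finally show ?thesis .
  qed
  then have "frechet_derivative f (at x) = (\<lambda>h. \<Sum>j\<in>UNIV. h$j * pd f j x)" by (rule ext)
  then show ?thesis using fd by simp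
qed

lemma pd_const [simp]: "pd (\<lambda>y. c) j x = 0"
  by (simp add: pd_def)

lemma pd_diff:
  "f differentiable (at x) \<Longrightarrow> g differentiable (at x) \<Longrightarrow>
   pd (\<lambda>y. f y - g y) j x = pd f j x - pd g j x"
proof -
  assume "f differentiable (at x)" "g differentiable (at x)"
  then obtain f' g' where f: "(f has_derivative f') (at x)" and g: "(g has_derivative g') (at x)"
    unfolding differentiable_def by blast
  from pd_eq_derivative[OF has_derivative_diff[OF f g]] pd_eq_derivative[OF f] pd_eq_derivative[OF g]
  show ?thesis by simp
qed

lemma pd_mult:
  "f differentiable (at x) \<Longrightarrow> g differentiable (at x) \<Longrightarrow>
   pd (\<lambda>y. f y * g y :: real) j x = f x * pd g j x + pd f j x * g x"
proof -
  assume "f differentiable (at x)" "g differentiable (at x)"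
  then obtain f' g' where f: "(f has_derivative f') (at x)" and g: "(g has_derivative g') (at x)"
    unfolding differentiable_def by blast
  from pd_eq_derivative[OF has_derivative_mult[OF f g]] pd_eq_derivative[OF f] pd_eq_derivative[OF g]
  show ?thesis by simp
qed

lemma pd_sum:
  assumes "\<And>i. i \<in> S \<Longrightarrow> f i differentiable (at x)"
  shows "pd (\<lambda>y. \<Sum>i\<in>S. f i y) j x = (\<Sum>i\<in>S. pd (f i) j x)"
proof -
  have "\<And>i. i \<in> S \<Longrightarrow> (f i has_derivative frechet_derivative (f i) (at x)) (at x)"
    using assms frechet_derivative_works by blast
  from pd_eq_derivative[OF has_derivative_sum[OF this]] show ?thesis
    by (simp add: pd_def)
qed

lemma pd_chain:
  assumes "(\<phi> has_real_derivative D) (at (f x))" and "f differentiable (at x)"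
  shows "pd (\<lambda>y. \<phi> (f y)) j x = D * pd f j x"
proof -
  obtain f' where f: "(f has_derivative f') (at x)"
    using assms(2) unfolding differentiable_def by blast
  have "(\<phi> has_derivative (\<lambda>h. D * h)) (at (f x))"
    using assms(1) by (simp add: has_field_derivative_def)
  from diff_chain_at[OF f this] have "((\<lambda>y. \<phi> (f y)) has_derivative (\<lambda>h. D * f' h)) (at x)"
    by (simp add: o_def)
  from pd_eq_derivative[OF this] pd_eq_derivative[OF f] show ?thesis by simp
qed

lemma differentiable_chain_real:
  assumes "(\<phi> has_real_derivative D) (at (f x))" and "f differentiable (at x)"
  shows "(\<lambda>y. \<phi> (f y)) differentiable (at x)"
proof -
  have "\<phi> differentiable (at (f x))"
    using assms(1) by (meson has_field_derivative_imp_has_derivative differentiableI)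
  from differentiable_chain_at[OF assms(2) this] show ?thesis by (simp add: o_def)
qed

lemma pd_transform_within_open:
  "open U \<Longrightarrow> x \<in> U \<Longrightarrow> (\<And>y. y \<in> U \<Longrightarrow> f y = g y) \<Longrightarrow>
   f differentiable (at x) \<Longrightarrow> pd f j x = pd g j x"
  unfolding pd_def by (simp add: frechet_derivative_transform_within_open[of f x U g])

lemma smooth_on_differentiable_at:
  "open U \<Longrightarrow> smooth_on U f \<Longrightarrow> x \<in> U \<Longrightarrow> f differentiable (at x)"
  unfolding smooth_on_def
  by (metis differentiable_on_eq_differentiable_at pds.simps(1))

lemma smooth_real_on_differentiable_at:
  "open I \<Longrightarrow> smooth_real_on I f \<Longrightarrow> t \<in> I \<Longrightarrow> f differentiable (at t)"
  unfolding smooth_real_on_def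
  by (metis differentiable_on_eq_differentiable_at funpow_0)

lemma differentiable_prod:
  fixes f :: "'i \<Rightarrow> 'a::real_normed_vector \<Rightarrow> real"
  assumes "\<And>i. i \<in> S \<Longrightarrow> f i differentiable (at x)"
  shows "(\<lambda>y. \<Prod>i\<in>S. f i y) differentiable (at x)"
proof -
  have "\<And>i. i \<in> S \<Longrightarrow> (f i has_derivative frechet_derivative (f i) (at x)) (at x)"
    using assms frechet_derivative_works by blast
  from has_derivative_prod[OF this] show ?thesis by (rule differentiableI)
qed

lemma differentiable_det:
  fixes M :: "real^'n \<Rightarrow> real^'m^'m"
  assumes "\<And>i j. (\<lambda>y. M y $ i $ j) differentiable (at x)"
  shows "(\<lambda>y. det (M y)) differentiable (at x)"
  unfolding det_def
  by (intro differentiable_sum ballI differentiable_mult differentiable_const differentiable_prod assms)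
    (simp add: finite_permutations)

lemma matrix_inv_right: "invertible M \<Longrightarrow> M ** matrix_inv M = mat 1"
  unfolding matrix_inv_def invertible_def by (rule someI2_ex) auto

lemma invertible_if_kernel_trivial:
  fixes M :: "real^'n^'n"
  assumes "\<And>v. M *v v = 0 \<Longrightarrow> v = 0"
  shows "invertible M"
proof -
  have "inj ((*v) M)"
    by (rule injI) (metis assms eq_iff_diff_eq_0 matrix_vector_mult_diff_distrib)
  then show ?thesis
    using matrix_left_invertible_injective invertible_left_inverse by blast
qed

lemma vector_matrix_mult_matrix_inv_symmetric:
  fixes M :: "real^'n^'n"
  assumes "invertible M" and "transpose M = M" and "M *v u = z"
  shows "z v* matrix_inv M = u"
proof -
  have "transpose (matrix_inv M) ** M = transpose (M ** matrix_inv M)"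
    using assms(2) by (metis matrix_transpose_mul)
  also have "\<dots> = mat 1"
    using matrix_inv_right[OF assms(1)] by simp
  finally have inv: "transpose (matrix_inv M) ** M = mat 1" .
  have "z v* matrix_inv M = transpose (matrix_inv M) *v (M *v u)"
    using assms(3) by simp
  also have "\<dots> = u"
    by (simp add: matrix_vector_mul_assoc inv)
  finally show ?thesis .
qed

lemma exists_nonzero_orthogonal:
  fixes B :: "real^'n"
  assumes "CARD('n) \<ge> 2"
  shows "\<exists>v. v \<noteq> 0 \<and> B \<bullet> v = 0"
proof -
  have "\<not> CARD('n) \<le> Suc 0" using assms by simp
  then obtain p q :: 'n where pq: "p \<noteq> q"
    unfolding card_le_Suc0_iff_eq[OF finite_class.finite_UNIV] by blast
  show ?thesis
  proof (cases "B $ p = 0")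
    case True
    then show ?thesis
      by (intro exI[of _ "axis p 1"]) (simp add: inner_axis axis_eq_0_iff)
  next
    case False
    define v where "v = B $ q *\<^sub>R axis p 1 - B $ p *\<^sub>R axis q (1::real)"
    have "v $ q = - B $ p" using pq by (simp add: v_def axis_def)
    then have "v \<noteq> 0" using False by auto
    moreover have "B \<bullet> v = 0" by (simp add: v_def inner_diff_right inner_axis)
    ultimately show ?thesis by blast
  qed
qed

lemma scaled_plus_rank_one_eq_zero:
  fixes A :: "real^'n^'n" and B :: "real^'n"
  assumes "CARD('n) \<ge> 2" and A: "\<And>v. A *v v = 0 \<Longrightarrow> v = 0"
    and eq: "\<And>i j. p * A$i$j + q * B$i * B$j = 0"
  shows "p = 0" and "q * B$k = 0"
proof -
  obtain v where v: "v \<noteq> 0" "B \<bullet> v = 0"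
    using exists_nonzero_orthogonal[OF assms(1)] by blast
  have "A *v v \<noteq> 0" using A v(1) by blast
  then obtain i where i: "(A *v v) $ i \<noteq> 0"
    by (auto simp: vec_eq_iff)
  have "0 = (\<Sum>j\<in>UNIV. (p * A$i$j + q * B$i * B$j) * v$j)"
    by (simp add: eq)
  also have "\<dots> = p * (A *v v) $ i + q * B$i * (B \<bullet> v)"
    by (simp add: matrix_vector_mult_def inner_vec_def algebra_simps sum.distrib sum_distrib_left)
  finally show "p = 0" using i v(2) by simp
  then show "q * B$k = 0" using eq[of k k] by simp
qed

section \<open>Functions of \<open>b\<^sup>2\<close>\<close>

text \<open>At \<open>t = b\<^sup>2\<close>, \<open>deformation_conformal_factor\<close> and \<open>deformation_obstruction\<close> are the
  coefficients \<open>P\<close> and \<open>\<Phi>\<close> of \<open>c h\<^sub>i\<^sub>j\<close> and \<open>c b\<^sub>i b\<^sub>j\<close> in the covariant derivative of the deformed form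
  (lemma \<open>covd_deformed_form\<close>).\<close>

definition deformation_ratio :: "(real \<Rightarrow> real) \<Rightarrow> (real \<Rightarrow> real) \<Rightarrow> (real \<Rightarrow> real) \<Rightarrow> real \<Rightarrow> real"
  where "deformation_ratio \<kappa> \<rho> \<nu> t = \<nu> t / (sqrt (1 - t * \<kappa> t) * exp (2 * \<rho> t))"

definition deformation_conformal_factor :: "(real \<Rightarrow> real) \<Rightarrow> (real \<Rightarrow> real) \<Rightarrow> (real \<Rightarrow> real) \<Rightarrow> real \<Rightarrow> real"
  where "deformation_conformal_factor \<kappa> \<rho> \<nu> t = \<nu> t * (1 + 2 * deriv \<rho> t * t) / (1 - t * \<kappa> t)"

definition deformation_obstruction :: "(real \<Rightarrow> real) \<Rightarrow> (real \<Rightarrow> real) \<Rightarrow> (real \<Rightarrow> real) \<Rightarrow> real \<Rightarrow> real"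
  where "deformation_obstruction \<kappa> \<rho> \<nu> t =
    2 * deriv \<nu> t - 4 * \<nu> t * deriv \<rho> t + \<nu> t * (\<kappa> t + t * deriv \<kappa> t) / (1 - t * \<kappa> t)"

lemma has_real_derivative_deformation_ratio:
  assumes "\<kappa> differentiable (at t)" "\<rho> differentiable (at t)" "\<nu> differentiable (at t)"
    and pos: "0 < 1 - t * \<kappa> t"
  shows "(deformation_ratio \<kappa> \<rho> \<nu> has_real_derivative
    deformation_obstruction \<kappa> \<rho> \<nu> t / (2 * sqrt (1 - t * \<kappa> t) * exp (2 * \<rho> t))) (at t)"
proof -
  note D = assms(1-3)[unfolded DERIV_deriv_iff_real_differentiable[symmetric]]
  define R where "R = sqrt (1 - t * \<kappa> t)"
  have R: "0 < R" "R * R = 1 - t * \<kappa> t"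
    using pos by (simp_all add: R_def)
  have "((\<lambda>t. \<nu> t / (sqrt (1 - t * \<kappa> t) * exp (2 * \<rho> t))) has_real_derivative
      (deriv \<nu> t * (R * exp (2 * \<rho> t)) - \<nu> t * (inverse R / 2 * - (\<kappa> t + t * deriv \<kappa> t)
        * exp (2 * \<rho> t) + exp (2 * \<rho> t) * (2 * deriv \<rho> t) * R))
      / (R * exp (2 * \<rho> t) * (R * exp (2 * \<rho> t)))) (at t)"
    unfolding R_def
    by (rule derivative_eq_intros D refl | use pos in simp)+
  moreover have "(deriv \<nu> t * (R * exp (2 * \<rho> t)) - \<nu> t * (inverse R / 2 * - (\<kappa> t + t * deriv \<kappa> t)
        * exp (2 * \<rho> t) + exp (2 * \<rho> t) * (2 * deriv \<rho> t) * R))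
      / (R * exp (2 * \<rho> t) * (R * exp (2 * \<rho> t))) =
    deformation_obstruction \<kappa> \<rho> \<nu> t / (2 * R * exp (2 * \<rho> t))"
    unfolding deformation_obstruction_def R(2)[symmetric] using R(1)
    by (simp add: field_simps)
  ultimately show ?thesis
    by (simp add: deformation_ratio_def[abs_def] R_def)
qed

section \<open>Coordinate identities\<close>

text \<open>The coordinate computations at a fixed point, with the tensors replaced by numbers:
  \<open>A, B, W\<close> stand for \<open>a\<^sub>i\<^sub>j, b\<^sub>i, b\<^sup>i\<close>, \<open>D m i j\<close> for \<open>\<partial>\<^sub>m a\<^sub>i\<^sub>j\<close> and \<open>dB m i\<close> for \<open>\<partial>\<^sub>m b\<^sub>i\<close>
  (in \<open>norm_sq_derivative_identity\<close>, \<open>dB i\<close> and \<open>dW i\<close> are \<open>\<partial>\<^sub>k b\<^sub>i\<close> and \<open>\<partial>\<^sub>k b\<^sup>i\<close>);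
  \<open>E, K, N, r, dK, dN\<close> are \<open>exp(2\<rho>), \<kappa>, \<nu>, 2\<rho>', \<kappa>', \<nu>'\<close> at \<open>s = b\<^sup>2\<close>, and \<open>dAbar\<close>, \<open>dBbar\<close> the
  derivatives of the deformed metric and form.\<close>

lemma norm_sq_derivative_identity:
  fixes A D :: "'n::finite \<Rightarrow> 'n \<Rightarrow> _" and W B dW dB :: "'n \<Rightarrow> real"
  assumes A_sym: "\<And>i j. A i j = A j i"
    and B_lower: "\<And>i. B i = (\<Sum>l\<in>UNIV. A i l * W l)"
    and dB_product: "\<And>i. (\<Sum>l\<in>UNIV. D k i l * W l + A i l * dW l) = dB i"
    and dB_christoffel: "\<And>i. dB i = c * A i k + 1/2 * (\<Sum>l\<in>UNIV. W l * (D i l k + D k l i - D l i k))"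
  shows "(\<Sum>i\<in>UNIV. B i * dW i + dB i * W i) = 2 * c * B k"
proof -
  define Q where "Q = (\<Sum>i\<in>UNIV. \<Sum>l\<in>UNIV. W i * W l * D k l i)"
  have s1: "(\<Sum>i\<in>UNIV. B i * dW i) = (\<Sum>l\<in>UNIV. W l * (\<Sum>i\<in>UNIV. A l i * dW i))"
  proof -
    have "(\<Sum>i\<in>UNIV. B i * dW i) = (\<Sum>i\<in>UNIV. \<Sum>l\<in>UNIV. A i l * W l * dW i)"
      by (simp add: B_lower sum_distrib_right)
    also have "\<dots> = (\<Sum>l\<in>UNIV. \<Sum>i\<in>UNIV. A i l * W l * dW i)" by (rule sum.swap)
    also have "\<dots> = (\<Sum>l\<in>UNIV. W l * (\<Sum>i\<in>UNIV. A l i * dW i))"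
      by (simp add: sum_distrib_left A_sym mult_ac)
    finally show ?thesis .
  qed
  have s2: "\<And>l. (\<Sum>i\<in>UNIV. A l i * dW i) = dB l - (\<Sum>i\<in>UNIV. D k l i * W i)"
    using dB_product by (simp add: sum.distrib algebra_simps)
  have s3: "(\<Sum>l\<in>UNIV. W l * (\<Sum>i\<in>UNIV. D k l i * W i)) = Q"
    unfolding Q_def by (subst sum.swap) (simp add: sum_distrib_left mult_ac)
  have s4: "(\<Sum>i\<in>UNIV. W i * A i k) = B k"
    by (simp add: B_lower A_sym mult.commute)
  have sA: "(\<Sum>i\<in>UNIV. \<Sum>l\<in>UNIV. W i * W l * D i l k) = (\<Sum>i\<in>UNIV. \<Sum>l\<in>UNIV. W i * W l * D l i k)"
    by (subst sum.swap) (simp add: mult_ac)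
  have s5: "(\<Sum>i\<in>UNIV. W i * dB i) = c * B k + Q / 2"
  proof -
    have "(\<Sum>i\<in>UNIV. W i * dB i) = c * (\<Sum>i\<in>UNIV. W i * A i k) + 1/2 * ((\<Sum>i\<in>UNIV. \<Sum>l\<in>UNIV. W i * W l * D i l k)
        + Q - (\<Sum>i\<in>UNIV. \<Sum>l\<in>UNIV. W i * W l * D l i k))"
      unfolding Q_def dB_christoffel
      by (simp add: sum_distrib_left sum_distrib_right sum.distrib sum_subtractf algebra_simps)
    then show ?thesis using s4 sA by simp
  qed
  have "(\<Sum>i\<in>UNIV. B i * dW i + dB i * W i) = (\<Sum>i\<in>UNIV. B i * dW i) + (\<Sum>i\<in>UNIV. W i * dB i)"
    by (simp add: sum.distrib mult.commute)
  also have "\<dots> = (\<Sum>l\<in>UNIV. W l * dB l) - Q + (c * B k + Q/2)"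
    using s1 s2 s3 s5 by (simp add: right_diff_distrib sum_subtractf)
  also have "\<dots> = 2 * c * B k" using s5 by simp
  finally show ?thesis .
qed

lemma deformed_metric_derivative_contraction:
  fixes A D dAbar :: "'n::finite \<Rightarrow> 'n \<Rightarrow> _" and W B :: "'n \<Rightarrow> real" and dB :: "'n \<Rightarrow> 'n \<Rightarrow> real"
  assumes A_sym: "\<And>i j. A i j = A j i"
    and B_lower: "\<And>i. B i = (\<Sum>l\<in>UNIV. A i l * W l)"
    and s_def: "s = (\<Sum>l\<in>UNIV. B l * W l)"
    and dB_christoffel: "\<And>i j. dB j i = c * A i j + 1/2 * (\<Sum>l\<in>UNIV. W l * (D i l j + D j l i - D l i j))"
    and dB_closed: "\<And>i j. dB j i = dB i j"
    and dAbar: "\<And>m p q. dAbar m p q = E * (2*c*r*B m*(A p q - K*B p*B q) + D m p q - 2*c*dK*B m*B p*B q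
                  - K*(dB m p*B q + B p*dB m q))"
  shows "(\<Sum>l\<in>UNIV. W l * (dAbar i l j + dAbar j l i - dAbar l i j)) =
    E * (2 * (1 - K* s) * (2*c*r*B i*B j + dB j i) - 2*c*r* s*(A i j - K*B i*B j)
      - 2*c*dK* s*B i*B j - 2*c*A i j)"
proof -
  define h where "h p q = A p q - K*B p*B q" for p q
  define T where "T l = D i l j + D j l i - D l i j" for l
  have "W l * (dAbar i l j + dAbar j l i - dAbar l i j) =
      (E*2*c*r*B i) * (W l * h l j) + (E*2*c*r*B j) * (W l * h l i)
      - (E*2*c*r*h i j + E*2*c*dK*B i*B j + E*2*K*dB j i) * (W l * B l) + E * (W l * T l)" for l
  proof -
    have "dB i l = dB l i" "dB j l = dB l j" "dB i j = dB j i" using dB_closed by auto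
    then show ?thesis unfolding dAbar h_def T_def by (simp add: algebra_simps)
  qed
  then have expand: "(\<Sum>l\<in>UNIV. W l * (dAbar i l j + dAbar j l i - dAbar l i j)) =
      (E*2*c*r*B i) * (\<Sum>l\<in>UNIV. W l * h l j) + (E*2*c*r*B j) * (\<Sum>l\<in>UNIV. W l * h l i)
      - (E*2*c*r*h i j + E*2*c*dK*B i*B j + E*2*K*dB j i) * (\<Sum>l\<in>UNIV. W l * B l)
      + E * (\<Sum>l\<in>UNIV. W l * T l)"
    by (simp add: sum.distrib sum_subtractf sum_distrib_left)
  have Wh: "(\<Sum>l\<in>UNIV. W l * h l q) = (1 - K* s) * B q" for q
  proof -
    have "(\<Sum>l\<in>UNIV. W l * h l q) = (\<Sum>l\<in>UNIV. A q l * W l) - K * B q * (\<Sum>l\<in>UNIV. B l * W l)"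
      unfolding h_def by (simp add: sum_subtractf sum_distrib_left A_sym algebra_simps)
    then show ?thesis using B_lower[of q] s_def by (simp add: algebra_simps)
  qed
  have WB: "(\<Sum>l\<in>UNIV. W l * B l) = s"
    using s_def by (simp add: mult.commute)
  have WT: "(\<Sum>l\<in>UNIV. W l * T l) = 2 * (dB j i - c * A i j)"
    using dB_christoffel[of j i] unfolding T_def by simp
  show ?thesis
    unfolding expand Wh WB WT by (simp add: h_def algebra_simps)
qed

lemma deformed_covd_identity:
  fixes A D dAbar :: "'n::finite \<Rightarrow> 'n \<Rightarrow> _" and W B :: "'n \<Rightarrow> real" and dB dBbar :: "'n \<Rightarrow> 'n \<Rightarrow> real"
  assumes A_sym: "\<And>i j. A i j = A j i"
    and B_lower: "\<And>i. B i = (\<Sum>l\<in>UNIV. A i l * W l)"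
    and s_def: "s = (\<Sum>l\<in>UNIV. B l * W l)"
    and dB_christoffel: "\<And>i j. dB j i = c * A i j + 1/2 * (\<Sum>l\<in>UNIV. W l * (D i l j + D j l i - D l i j))"
    and dB_closed: "\<And>i j. dB j i = dB i j"
    and nondegenerate: "1 - K * s \<noteq> 0" and E: "E \<noteq> 0"
    and dAbar: "\<And>m p q. dAbar m p q = E * (2*c*r*B m*(A p q - K*B p*B q) + D m p q - 2*c*dK*B m*B p*B q
                  - K*(dB m p*B q + B p*dB m q))"
    and dBbar: "dBbar i j = dN*(2*c*B j)*B i + N*dB j i"
  shows "dBbar i j - 1/2 * (\<Sum>l\<in>UNIV. (N / (E * (1 - K* s)) * W l) * (dAbar i l j + dAbar j l i - dAbar l i j))
     = c * (N * (1 + r* s) / (1 - K* s)) * (A i j - K*B i*B j)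
       + c * (2*dN - 2*N*r + N*(K + s*dK)/(1 - K* s)) * B i * B j"
proof -
  define d where "d = 1 - K * s"
  have pull: "(\<Sum>l\<in>UNIV. (N / (E * d) * W l) * (dAbar i l j + dAbar j l i - dAbar l i j))
     = N / (E * d) * (\<Sum>l\<in>UNIV. W l * (dAbar i l j + dAbar j l i - dAbar l i j))"
    by (simp add: sum_distrib_left mult.assoc)
  have "d \<noteq> 0" using nondegenerate by (simp add: d_def)
  then show ?thesis
    unfolding d_def[symmetric] pull dBbar
      deformed_metric_derivative_contraction[OF A_sym B_lower s_def dB_christoffel dB_closed dAbar]
    using E by (simp add: field_simps)
qed

section \<open>Closed conformal one-forms\<close>

definition raised_form :: "(real^'n \<Rightarrow> real^'n^'n) \<Rightarrow> (real^'n \<Rightarrow> real^'n) \<Rightarrow> real^'n \<Rightarrow> real^'n"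
  where "raised_form a b x = matrix_inv (a x) *v b x"

lemma norm_sq_eq_sum: "norm_sq a b = (\<lambda>x. \<Sum>i\<in>UNIV. b x $ i * raised_form a b x $ i)"
  by (simp add: fun_eq_iff norm_sq_def raised_form_def inner_vec_def)

lemma christoffel_contraction:
  fixes M :: "real^'n \<Rightarrow> real^'n^'n"
  assumes "invertible (M x)" "transpose (M x) = M x" "M x *v u = z"
  shows "(\<Sum>k\<in>UNIV. christoffel M k i j x * z $ k) =
    1/2 * (\<Sum>l\<in>UNIV. u $ l *
      (pd (\<lambda>y. M y $ l $ j) i x + pd (\<lambda>y. M y $ l $ i) j x - pd (\<lambda>y. M y $ i $ j) l x))"
proof -
  define T where
    "T l = pd (\<lambda>y. M y $ l $ j) i x + pd (\<lambda>y. M y $ l $ i) j x - pd (\<lambda>y. M y $ i $ j) l x" for l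
  have u: "(\<Sum>k\<in>UNIV. z $ k * matrix_inv (M x) $ k $ l) = u $ l" for l
    using arg_cong[OF vector_matrix_mult_matrix_inv_symmetric[OF assms], of "\<lambda>v. v $ l"]
    by (simp add: vector_matrix_mult_def)
  have "(\<Sum>k\<in>UNIV. christoffel M k i j x * z $ k) =
      1/2 * (\<Sum>k\<in>UNIV. \<Sum>l\<in>UNIV. z $ k * matrix_inv (M x) $ k $ l * T l)"
    by (simp add: christoffel_def T_def sum_distrib_left sum_distrib_right mult_ac)
  also have "\<dots> = 1/2 * (\<Sum>l\<in>UNIV. (\<Sum>k\<in>UNIV. z $ k * matrix_inv (M x) $ k $ l) * T l)"
    by (subst sum.swap) (simp add: sum_distrib_right)
  finally show ?thesis by (simp add: u T_def)
qed

locale closed_conformal_chart =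
  fixes U :: "(real^'n) set" and a :: "real^'n \<Rightarrow> real^'n^'n" and b :: "real^'n \<Rightarrow> real^'n"
    and c :: "real^'n \<Rightarrow> real"
  assumes open_U: "open U"
    and metric: "riemannian_metric U a"
    and form: "smooth_one_form U b"
    and covd_form: "\<And>x i j. x \<in> U \<Longrightarrow> covd a b i j x = c x * a x $ i $ j"
begin

lemma differentiable_metric: "x \<in> U \<Longrightarrow> (\<lambda>y. a y $ i $ j) differentiable (at x)"
  using metric open_U smooth_on_differentiable_at unfolding riemannian_metric_def by blast

lemma differentiable_form: "x \<in> U \<Longrightarrow> (\<lambda>y. b y $ i) differentiable (at x)"
  using form open_U smooth_on_differentiable_at unfolding smooth_one_form_def by blast

lemma metric_sym: "x \<in> U \<Longrightarrow> a x $ i $ j = a x $ j $ i"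
  using metric unfolding riemannian_metric_def by blast

lemma metric_transpose: "x \<in> U \<Longrightarrow> transpose (a x) = a x"
  by (simp add: vec_eq_iff transpose_def metric_sym)

lemma metric_kernel: "x \<in> U \<Longrightarrow> a x *v v = 0 \<Longrightarrow> v = 0"
  using metric unfolding riemannian_metric_def by force

lemma metric_invertible: "x \<in> U \<Longrightarrow> invertible (a x)"
  by (rule invertible_if_kernel_trivial) (rule metric_kernel)

lemma metric_raised_form: "x \<in> U \<Longrightarrow> a x *v raised_form a b x = b x"
  by (simp add: raised_form_def matrix_vector_mul_assoc matrix_inv_right metric_invertible)

lemma lower_raised_form: "x \<in> U \<Longrightarrow> b x $ i = (\<Sum>l\<in>UNIV. a x $ i $ l * raised_form a b x $ l)"
  using metric_raised_form by (simp add: matrix_vector_mult_def vec_eq_iff)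

lemma differentiable_raised_form:
  assumes x: "x \<in> U"
  shows "(\<lambda>y. raised_form a b y $ l) differentiable (at x)"
proof -
  let ?cramer = "\<lambda>y. det (\<chi> i j. if j = l then b y $ i else a y $ i $ j) / det (a y)"
  have det: "det (a y) \<noteq> 0" if "y \<in> U" for y
    using that metric_invertible invertible_det_nz by blast
  have cramer: "raised_form a b y $ l = ?cramer y" if "y \<in> U" for y
    using cramer[OF det[OF that]] metric_raised_form[OF that] by simp
  have "(\<lambda>y. det (\<chi> i j. if j = l then b y $ i else a y $ i $ j)) differentiable (at x)"
    by (rule differentiable_det, rename_tac i j, case_tac "j = l")
      (simp_all add: differentiable_metric[OF x] differentiable_form[OF x])
  moreover have "(\<lambda>y. det (a y)) differentiable (at x)"
    by (rule differentiable_det) (rule differentiable_metric[OF x])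
  ultimately have "?cramer differentiable (at x)"
    using det[OF x] by (simp add: differentiable_divide)
  then obtain f' where "(?cramer has_derivative f') (at x)"
    unfolding differentiable_def by blast
  then have "((\<lambda>y. raised_form a b y $ l) has_derivative f') (at x)"
    by (rule has_derivative_transform_within_open[OF _ open_U x]) (simp add: cramer)
  then show ?thesis
    unfolding differentiable_def by blast
qed

lemma differentiable_norm_sq: "x \<in> U \<Longrightarrow> norm_sq a b differentiable (at x)"
  unfolding norm_sq_eq_sum
  by (intro differentiable_sum ballI differentiable_mult differentiable_form differentiable_raised_form) simp_all

lemma pd_norm_sq_expansion:
  assumes x: "x \<in> U"
  shows "pd (norm_sq a b) k x = (\<Sum>i\<in>UNIV.
    b x $ i * pd (\<lambda>y. raised_form a b y $ i) k x + pd (\<lambda>y. b y $ i) k x * raised_form a b x $ i)"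
  unfolding norm_sq_eq_sum
  using differentiable_form[OF x] differentiable_raised_form[OF x]
  by (simp add: pd_sum pd_mult differentiable_mult)

lemma pd_lower_raised_form:
  assumes x: "x \<in> U"
  shows "(\<Sum>l\<in>UNIV. pd (\<lambda>y. a y $ i $ l) k x * raised_form a b x $ l
      + a x $ i $ l * pd (\<lambda>y. raised_form a b y $ l) k x) = pd (\<lambda>y. b y $ i) k x"
proof -
  have "pd (\<lambda>y. b y $ i) k x = pd (\<lambda>y. \<Sum>l\<in>UNIV. a y $ i $ l * raised_form a b y $ l) k x"
    using differentiable_form[OF x] lower_raised_form
    by (intro pd_transform_within_open[OF open_U x]) simp_all
  also have "\<dots> = (\<Sum>l\<in>UNIV. pd (\<lambda>y. a y $ i $ l) k x * raised_form a b x $ l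
      + a x $ i $ l * pd (\<lambda>y. raised_form a b y $ l) k x)"
    using differentiable_metric[OF x] differentiable_raised_form[OF x]
    by (simp add: pd_sum pd_mult differentiable_mult add.commute)
  finally show ?thesis ..
qed

lemma pd_form_christoffel:
  assumes x: "x \<in> U"
  shows "pd (\<lambda>y. b y $ i) j x = c x * a x $ i $ j + 1/2 * (\<Sum>l\<in>UNIV. raised_form a b x $ l *
    (pd (\<lambda>y. a y $ l $ j) i x + pd (\<lambda>y. a y $ l $ i) j x - pd (\<lambda>y. a y $ i $ j) l x))"
  using covd_form[OF x, of i j]
    christoffel_contraction[where M = a and x = x,
      OF metric_invertible[OF x] metric_transpose[OF x] metric_raised_form[OF x]]
  by (simp add: covd_def)

lemma form_closed:
  assumes x: "x \<in> U"
  shows "pd (\<lambda>y. b y $ i) j x = pd (\<lambda>y. b y $ j) i x"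
proof -
  have "pd (\<lambda>y. a y $ i $ j) l x = pd (\<lambda>y. a y $ j $ i) l x" for l
    using metric_sym differentiable_metric[OF x] by (intro pd_transform_within_open[OF open_U x]) simp_all
  then show ?thesis
    using pd_form_christoffel[OF x, of i j] pd_form_christoffel[OF x, of j i] metric_sym[OF x, of i j]
    by (simp add: add.commute)
qed

lemma pd_norm_sq:
  assumes x: "x \<in> U"
  shows "pd (norm_sq a b) k x = 2 * c x * b x $ k"
  unfolding pd_norm_sq_expansion[OF x]
  by (rule norm_sq_derivative_identity[where A = "\<lambda>i j. a x $ i $ j"
        and D = "\<lambda>m i j. pd (\<lambda>y. a y $ i $ j) m x"])
    (simp_all add: metric_sym[OF x] lower_raised_form[OF x] pd_lower_raised_form[OF x]
      pd_form_christoffel[OF x])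

lemma differentiable_comp_norm_sq:
  fixes \<phi> :: "real \<Rightarrow> real"
  assumes "x \<in> U" "\<phi> differentiable (at (norm_sq a b x))"
  shows "(\<lambda>y. \<phi> (norm_sq a b y)) differentiable (at x)"
  using DERIV_deriv_iff_real_differentiable[THEN iffD2, OF assms(2)]
  by (rule differentiable_chain_real) (rule differentiable_norm_sq[OF assms(1)])

lemma pd_comp_norm_sq:
  assumes "x \<in> U" "(\<phi> has_real_derivative D) (at (norm_sq a b x))"
  shows "pd (\<lambda>y. \<phi> (norm_sq a b y)) k x = D * (2 * c x * b x $ k)"
  using pd_chain[OF assms(2) differentiable_norm_sq] pd_norm_sq assms(1) by simp

end

section \<open>The deformation\<close>

lemma deformed_metric_mult_vec:
  "deformed_metric \<kappa> \<rho> a b x *v v = exp (2 * \<rho> (norm_sq a b x)) *\<^sub>R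
    (a x *v v - (\<kappa> (norm_sq a b x) * (b x \<bullet> v)) *\<^sub>R b x)"
  by (simp add: vec_eq_iff matrix_vector_mult_def deformed_metric_def inner_vec_def
      sum_distrib_left sum_subtractf algebra_simps)

locale conformal_deformation = closed_conformal_chart U a b c
  for U :: "(real^'n) set" and a b c +
  fixes \<kappa> \<rho> \<nu> :: "real \<Rightarrow> real"
  assumes differentiable_coefficients: "\<And>x. x \<in> U \<Longrightarrow>
      \<kappa> differentiable (at (norm_sq a b x)) \<and> \<rho> differentiable (at (norm_sq a b x)) \<and>
      \<nu> differentiable (at (norm_sq a b x))"
    and nondegenerate: "\<And>x. x \<in> U \<Longrightarrow> 0 < 1 - \<kappa> (norm_sq a b x) * norm_sq a b x"
begin

lemma pd_deformed_metric:
  assumes x: "x \<in> U"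
  shows "pd (\<lambda>y. deformed_metric \<kappa> \<rho> a b y $ p $ q) m x =
    exp (2 * \<rho> (norm_sq a b x)) *
      (2 * c x * (2 * deriv \<rho> (norm_sq a b x)) * b x $ m *
        (a x $ p $ q - \<kappa> (norm_sq a b x) * b x $ p * b x $ q)
      + pd (\<lambda>y. a y $ p $ q) m x
      - 2 * c x * deriv \<kappa> (norm_sq a b x) * b x $ m * b x $ p * b x $ q
      - \<kappa> (norm_sq a b x) * (pd (\<lambda>y. b y $ p) m x * b x $ q + b x $ p * pd (\<lambda>y. b y $ q) m x))"
proof -
  let ?s = "norm_sq a b x"
  have D: "(\<kappa> has_real_derivative deriv \<kappa> ?s) (at ?s)" "(\<rho> has_real_derivative deriv \<rho> ?s) (at ?s)"
    using differentiable_coefficients[OF x] DERIV_deriv_iff_real_differentiable by blast+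
  have exp: "((\<lambda>t. exp (2 * \<rho> t)) has_real_derivative exp (2 * \<rho> ?s) * (2 * deriv \<rho> ?s)) (at ?s)"
    using D(2) by (auto intro!: derivative_eq_intros)
  have d: "(\<lambda>y. exp (2 * \<rho> (norm_sq a b y))) differentiable (at x)"
    "(\<lambda>y. \<kappa> (norm_sq a b y)) differentiable (at x)"
    using exp D by (auto intro!: differentiable_comp_norm_sq x simp: real_differentiable_def)
  show ?thesis
    unfolding deformed_metric_def vec_lambda_beta
    using differentiable_metric[OF x] differentiable_form[OF x] d
    by (simp add: pd_mult pd_diff pd_comp_norm_sq[OF x exp] pd_comp_norm_sq[OF x D(1)] algebra_simps)
qed

lemma pd_deformed_form:
  assumes x: "x \<in> U"
  shows "pd (\<lambda>y. deformed_form \<nu> a b y $ i) j x =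
    deriv \<nu> (norm_sq a b x) * (2 * c x * b x $ j) * b x $ i + \<nu> (norm_sq a b x) * pd (\<lambda>y. b y $ i) j x"
proof -
  have D: "(\<nu> has_real_derivative deriv \<nu> (norm_sq a b x)) (at (norm_sq a b x))"
    using differentiable_coefficients[OF x] DERIV_deriv_iff_real_differentiable by blast
  show ?thesis
    unfolding deformed_form_def vector_scaleR_component
    using differentiable_form[OF x] differentiable_comp_norm_sq[OF x] differentiable_coefficients[OF x]
    by (simp add: pd_mult pd_comp_norm_sq[OF x D] algebra_simps)
qed

lemma deformed_metric_transpose:
  "x \<in> U \<Longrightarrow> transpose (deformed_metric \<kappa> \<rho> a b x) = deformed_metric \<kappa> \<rho> a b x"
  by (simp add: vec_eq_iff transpose_def deformed_metric_def metric_sym mult_ac)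

lemma deformed_metric_raised_form:
  assumes x: "x \<in> U"
  shows "deformed_metric \<kappa> \<rho> a b x *v
      ((\<nu> (norm_sq a b x) / (exp (2 * \<rho> (norm_sq a b x)) * (1 - \<kappa> (norm_sq a b x) * norm_sq a b x)))
        *\<^sub>R raised_form a b x)
    = deformed_form \<nu> a b x"
proof -
  define t where
    "t = \<nu> (norm_sq a b x) / (exp (2 * \<rho> (norm_sq a b x)) * (1 - \<kappa> (norm_sq a b x) * norm_sq a b x))"
  have "b x \<bullet> raised_form a b x = norm_sq a b x"
    by (simp add: norm_sq_def raised_form_def)
  then have "deformed_metric \<kappa> \<rho> a b x *v (t *\<^sub>R raised_form a b x) =
      (exp (2 * \<rho> (norm_sq a b x)) * t * (1 - \<kappa> (norm_sq a b x) * norm_sq a b x)) *\<^sub>R b x"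
    by (simp add: deformed_metric_mult_vec matrix_vector_mult_scaleR metric_raised_form[OF x]
        algebra_simps)
  also have "exp (2 * \<rho> (norm_sq a b x)) * t * (1 - \<kappa> (norm_sq a b x) * norm_sq a b x) = \<nu> (norm_sq a b x)"
    using nondegenerate[OF x] by (simp add: t_def)
  finally show ?thesis
    by (simp add: t_def deformed_form_def)
qed

lemma deformed_metric_invertible:
  assumes x: "x \<in> U"
  shows "invertible (deformed_metric \<kappa> \<rho> a b x)"
proof (rule invertible_if_kernel_trivial)
  fix v assume "deformed_metric \<kappa> \<rho> a b x *v v = 0"
  define \<beta> where "\<beta> = b x \<bullet> v"
  then have av: "a x *v v = (\<kappa> (norm_sq a b x) * \<beta>) *\<^sub>R b x"
    using \<open>deformed_metric \<kappa> \<rho> a b x *v v = 0\<close> by (simp add: deformed_metric_mult_vec)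
  also have "\<dots> = a x *v ((\<kappa> (norm_sq a b x) * \<beta>) *\<^sub>R raised_form a b x)"
    by (simp add: matrix_vector_mult_scaleR metric_raised_form[OF x])
  finally have "a x *v (v - (\<kappa> (norm_sq a b x) * \<beta>) *\<^sub>R raised_form a b x) = 0"
    by (simp add: matrix_vector_mult_diff_distrib)
  then have "v = (\<kappa> (norm_sq a b x) * \<beta>) *\<^sub>R raised_form a b x"
    using metric_kernel[OF x] by fastforce
  then have "\<beta> = b x \<bullet> ((\<kappa> (norm_sq a b x) * \<beta>) *\<^sub>R raised_form a b x)"
    unfolding \<beta>_def by (rule arg_cong)
  also have "\<dots> = \<kappa> (norm_sq a b x) * \<beta> * norm_sq a b x"
    by (simp add: norm_sq_def raised_form_def)
  finally have "\<beta> = \<kappa> (norm_sq a b x) * \<beta> * norm_sq a b x" .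
  then have "\<beta> * (1 - \<kappa> (norm_sq a b x) * norm_sq a b x) = 0"
    by (simp add: algebra_simps)
  then have "\<beta> = 0"
    using nondegenerate[OF x] by simp
  then show "v = 0"
    using av metric_kernel[OF x] by simp
qed

lemma covd_deformed_form:
  assumes x: "x \<in> U"
  shows "covd (deformed_metric \<kappa> \<rho> a b) (deformed_form \<nu> a b) i j x =
    c x * deformation_conformal_factor \<kappa> \<rho> \<nu> (norm_sq a b x) *
      (a x $ i $ j - \<kappa> (norm_sq a b x) * b x $ i * b x $ j)
    + c x * deformation_obstruction \<kappa> \<rho> \<nu> (norm_sq a b x) * b x $ i * b x $ j"
proof -
  have "1 - \<kappa> (norm_sq a b x) * norm_sq a b x \<noteq> 0"
    using nondegenerate[OF x] by simp
  from deformed_covd_identity[where A = "\<lambda>i j. a x $ i $ j" and D = "\<lambda>m p q. pd (\<lambda>y. a y $ p $ q) m x"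
      and dAbar = "\<lambda>m p q. pd (\<lambda>y. deformed_metric \<kappa> \<rho> a b y $ p $ q) m x"
      and W = "\<lambda>l. raised_form a b x $ l" and B = "\<lambda>i. b x $ i" and dB = "\<lambda>m p. pd (\<lambda>y. b y $ p) m x"
      and dBbar = "\<lambda>i j. pd (\<lambda>y. deformed_form \<nu> a b y $ i) j x" and c = "c x",
      OF metric_sym[OF x] lower_raised_form[OF x] fun_cong[OF norm_sq_eq_sum] pd_form_christoffel[OF x]
      form_closed[OF x] this exp_not_eq_zero pd_deformed_metric[OF x] pd_deformed_form[OF x]]
  show ?thesis
    unfolding covd_def christoffel_contraction[where M = "deformed_metric \<kappa> \<rho> a b" and x = x,
      OF deformed_metric_invertible[OF x] deformed_metric_transpose[OF x] deformed_metric_raised_form[OF x]]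
    by (simp add: deformation_conformal_factor_def deformation_obstruction_def mult_ac)
qed

lemma deformation_ratio_eq_iff:
  assumes x: "x \<in> U"
  shows "deformation_ratio \<kappa> \<rho> \<nu> (norm_sq a b x) = C \<longleftrightarrow>
    \<nu> (norm_sq a b x) = C * sqrt (1 - norm_sq a b x * \<kappa> (norm_sq a b x)) * exp (2 * \<rho> (norm_sq a b x))"
proof -
  have "0 < sqrt (1 - norm_sq a b x * \<kappa> (norm_sq a b x))"
    using nondegenerate[OF x] by (simp add: mult.commute)
  then show ?thesis
    by (auto simp: deformation_ratio_def field_simps)
qed

lemma has_real_derivative_deformation_ratio_at:
  assumes x: "x \<in> U"
  shows "(deformation_ratio \<kappa> \<rho> \<nu> has_real_derivative
    deformation_obstruction \<kappa> \<rho> \<nu> (norm_sq a b x) /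
      (2 * sqrt (1 - norm_sq a b x * \<kappa> (norm_sq a b x)) * exp (2 * \<rho> (norm_sq a b x))))
    (at (norm_sq a b x))"
  using differentiable_coefficients[OF x] nondegenerate[OF x]
  by (intro has_real_derivative_deformation_ratio) (simp_all add: mult.commute)

lemma differentiable_deformation_ratio:
  "x \<in> U \<Longrightarrow> (\<lambda>y. deformation_ratio \<kappa> \<rho> \<nu> (norm_sq a b y)) differentiable (at x)"
  by (rule differentiable_chain_real[OF has_real_derivative_deformation_ratio_at differentiable_norm_sq])

lemma pd_deformation_ratio:
  assumes x: "x \<in> U"
  shows "pd (\<lambda>y. deformation_ratio \<kappa> \<rho> \<nu> (norm_sq a b y)) k x =
    c x * deformation_obstruction \<kappa> \<rho> \<nu> (norm_sq a b x) * b x $ k /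
      (sqrt (1 - norm_sq a b x * \<kappa> (norm_sq a b x)) * exp (2 * \<rho> (norm_sq a b x)))"
  by (simp add: pd_comp_norm_sq[OF x has_real_derivative_deformation_ratio_at[OF x]])

lemma obstruction_vanishes_if_ratio_stationary:
  assumes x: "x \<in> U" and "pd (\<lambda>y. deformation_ratio \<kappa> \<rho> \<nu> (norm_sq a b y)) k x = 0"
  shows "c x * deformation_obstruction \<kappa> \<rho> \<nu> (norm_sq a b x) * b x $ k = 0"
proof -
  have "0 < sqrt (1 - norm_sq a b x * \<kappa> (norm_sq a b x))"
    using nondegenerate[OF x] by (simp add: mult.commute)
  then show ?thesis
    using assms(2) by (simp add: pd_deformation_ratio[OF x])
qed

lemma deformation_ratio_locally_constant:
  assumes card: "CARD('n) \<ge> 2"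
    and cc: "closed_conformal U (deformed_metric \<kappa> \<rho> a b) (deformed_form \<nu> a b)"
    and x: "x \<in> U"
  shows "((\<lambda>y. deformation_ratio \<kappa> \<rho> \<nu> (norm_sq a b y)) has_derivative (\<lambda>h. 0)) (at x)"
proof -
  obtain c' where c': "\<And>i j. covd (deformed_metric \<kappa> \<rho> a b) (deformed_form \<nu> a b) i j x =
      c' x * deformed_metric \<kappa> \<rho> a b x $ i $ j"
    using cc x unfolding closed_conformal_def by blast
  define p where "p = c x * deformation_conformal_factor \<kappa> \<rho> \<nu> (norm_sq a b x)
      - c' x * exp (2 * \<rho> (norm_sq a b x))"
  define q where "q = c x * deformation_obstruction \<kappa> \<rho> \<nu> (norm_sq a b x) - p * \<kappa> (norm_sq a b x)"
  have "p * a x $ i $ j + q * b x $ i * b x $ j = 0" for i j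
    using covd_deformed_form[OF x, of i j] c'[of i j]
    by (simp add: p_def q_def deformed_metric_def algebra_simps)
  \<comment> \<open>the only place where the dimension bound is needed\<close>
  note rank_one = scaled_plus_rank_one_eq_zero[OF card metric_kernel[OF x] this]
  have "pd (\<lambda>y. deformation_ratio \<kappa> \<rho> \<nu> (norm_sq a b y)) k x = 0" for k
    using rank_one(2)[of k] by (simp add: pd_deformation_ratio[OF x] q_def rank_one(1))
  then show ?thesis
    using has_derivative_pd_expansion[OF differentiable_deformation_ratio[OF x]] by simp
qed

lemma closed_conformal_deformed_if_ratio_constant:
  assumes "\<And>x. x \<in> U \<Longrightarrow> deformation_ratio \<kappa> \<rho> \<nu> (norm_sq a b x) = C"
  shows "closed_conformal U (deformed_metric \<kappa> \<rho> a b) (deformed_form \<nu> a b)"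
proof -
  have "c x * deformation_obstruction \<kappa> \<rho> \<nu> (norm_sq a b x) * b x $ i = 0" if x: "x \<in> U" for x i
  proof (rule obstruction_vanishes_if_ratio_stationary[OF x])
    have "pd (\<lambda>y. deformation_ratio \<kappa> \<rho> \<nu> (norm_sq a b y)) i x = pd (\<lambda>y. C) i x"
      using assms differentiable_deformation_ratio[OF x] by (intro pd_transform_within_open[OF open_U x])
    then show "pd (\<lambda>y. deformation_ratio \<kappa> \<rho> \<nu> (norm_sq a b y)) i x = 0" by simp
  qed
  then show ?thesis
    unfolding closed_conformal_def
    by (intro exI[of _ "\<lambda>x. c x * deformation_conformal_factor \<kappa> \<rho> \<nu> (norm_sq a b x)
        / exp (2 * \<rho> (norm_sq a b x))"] ballI allI) (simp add: covd_deformed_form deformed_metric_def)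
qed

end

theorem proposition5p2:
  fixes U :: "(real^'n) set" and a :: "real^'n \<Rightarrow> real^'n^'n" and b :: "real^'n \<Rightarrow> real^'n"
    and \<kappa> \<rho> \<nu> :: "real \<Rightarrow> real" and I :: "real set"
  assumes dim: "CARD('n) \<ge> 2"
    and U: "open U" "connected U" "U \<noteq> {}"
    and a: "riemannian_metric U a"
    and b: "smooth_one_form U b"
    and cc: "closed_conformal U a b"
    and np: "\<not> parallel U a b"
    and I: "open I" "\<forall>x\<in>U. norm_sq a b x \<in> I"
    and sm: "smooth_real_on I \<kappa>" "smooth_real_on I \<rho>" "smooth_real_on I \<nu>"
    and pos: "\<forall>x\<in>U. 1 - \<kappa> (norm_sq a b x) * norm_sq a b x > 0"
    and nz: "\<forall>x\<in>U. \<nu> (norm_sq a b x) \<noteq> 0"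
  shows "closed_conformal U (deformed_metric \<kappa> \<rho> a b) (deformed_form \<nu> a b) \<longleftrightarrow>
    (\<exists>C::real. C \<noteq> 0 \<and> (\<forall>x\<in>U. \<nu> (norm_sq a b x) =
        C * sqrt (1 - norm_sq a b x * \<kappa> (norm_sq a b x)) * exp (2 * \<rho> (norm_sq a b x))))"
proof -
  obtain c where "\<And>x i j. x \<in> U \<Longrightarrow> covd a b i j x = c x * a x $ i $ j"
    using cc unfolding closed_conformal_def by blast
  then interpret conformal_deformation U a b c \<kappa> \<rho> \<nu>
    using U(1) a b I sm pos by unfold_locales (auto intro: smooth_real_on_differentiable_at)
  show ?thesis
  proof
    assume deformed: "closed_conformal U (deformed_metric \<kappa> \<rho> a b) (deformed_form \<nu> a b)"
    obtain x0 where x0: "x0 \<in> U" using U(3) by blast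
    have "deformation_ratio \<kappa> \<rho> \<nu> (norm_sq a b x) = deformation_ratio \<kappa> \<rho> \<nu> (norm_sq a b x0)"
      if "x \<in> U" for x
      using has_derivative_zero_unique_connected[OF U(1,2) deformation_ratio_locally_constant[OF dim deformed]]
        that x0 by blast
    moreover have "deformation_ratio \<kappa> \<rho> \<nu> (norm_sq a b x0) \<noteq> 0"
      using nz pos x0 by (force simp: deformation_ratio_def mult.commute)
    ultimately show "\<exists>C. C \<noteq> 0 \<and> (\<forall>x\<in>U. \<nu> (norm_sq a b x) =
        C * sqrt (1 - norm_sq a b x * \<kappa> (norm_sq a b x)) * exp (2 * \<rho> (norm_sq a b x)))"
      using deformation_ratio_eq_iff by blast
  qed (use deformation_ratio_eq_iff closed_conformal_deformed_if_ratio_constant in blast)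
qed

end
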